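(* Let $n\ge2$. 1) The subgroup of $UB_n$ generated by $\sigma_1,\dots,\sigma_{n-1}$ is isomorphic to the braid group $B_n$ (via $\sigma_i\mapsto\sigma_i$). 2) There exist homomorphisms $\varphi_{US}:UB_n\to SG_n$, $\varphi_{UV}:UB_n\to VB_n$, $\varphi_{UB}:UB_n\to B_n$, given by $\sigma_i\mapsto\sigma_i$ for all three, and $c_i\mapsto\tau_i$, $c_i\mapsto\rho_i$, $c_i\mapsto 1$ respectively. 3) $UB_n$ is an Artin group.
   Context: $B_n$ is the group with generators $\sigma_1,\dots,\sigma_{n-1}$ and relations $\sigma_i\sigma_{i+1}\sigma_i=\sigma_{i+1}\sigma_i\sigma_{i+1}$ ($1\le i\le n-2$), $\sigma_i\sigma_j=\sigma_j\sigma_i$ ($|i-j|\ge2$). The universal braid group $UB_n$ has generators $\sigma_1,\dots,\sigma_{n-1},c_1,\dots,c_{n-1}$ and defining relations: the braid relations above, $c_ic_j=c_jc_i$ ($|i-j|\ge2$), and $c_i\sigma_j=\sigma_jc_i$ ($|i-j|\ge2$). The singular braid group $SG_n$ has generators $\sigma_1,\dots,\sigma_{n-1},\tau_1,\dots,\tau_{n-1}$ and relations: the braid relations, $\tau_i\tau_j=\tau_j\tau_i$ ($|i-j|\ge2$), $\tau_i\sigma_j=\sigma_j\tau_i$ ($|i-j|\ge2$), $\tau_i\sigma_i=\sigma_i\tau_i$, $\sigma_i\sigma_{i+1}\tau_i=\tau_{i+1}\sigma_i\sigma_{i+1}$, $\sigma_{i+1}\sigma_i\tau_{i+1}=\tau_i\sigma_{i+1}\sigma_i$.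 The virtual braid group $VB_n$ has generators $\sigma_1,\dots,\sigma_{n-1},\rho_1,\dots,\rho_{n-1}$ and relations: the braid relations, $\rho_i\rho_{i+1}\rho_i=\rho_{i+1}\rho_i\rho_{i+1}$, $\rho_i\rho_j=\rho_j\rho_i$ ($|i-j|\ge2$), $\rho_i^2=1$, $\sigma_i\rho_j=\rho_j\sigma_i$ ($|i-j|\ge2$), $\rho_i\rho_{i+1}\sigma_i=\sigma_{i+1}\rho_i\rho_{i+1}$. An Artin group is a group given by a presentation with generators $a_i$ ($i\in I$) and, for some pairs $i\ne j$, a relation $a_ia_ja_i\cdots=a_ja_ia_j\cdots$ with both sides alternating words of the same length $m_{ij}\ge2$ (and no other relations). *)

theory Defs
  imports "HOL-Algebra.Algebra"
begin

text \<open>A letter is a generator with a sign (True = positive, False = inverse).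
  Words are lists of letters.\<close>

type_synonym 'a word = "('a \<times> bool) list"

definition words :: "'a set \<Rightarrow> 'a word set" where
  "words S = {w. \<forall>l \<in> set w. fst l \<in> S}"

definition pw :: "'a list \<Rightarrow> 'a word" where
  "pw xs = map (\<lambda>x. (x, True)) xs"

inductive pres_eq :: "('a word \<times> 'a word) set \<Rightarrow> 'a word \<Rightarrow> 'a word \<Rightarrow> bool"
  for R where
  refl: "pres_eq R w w"
| sym: "pres_eq R u v \<Longrightarrow> pres_eq R v u"
| trans: "pres_eq R u v \<Longrightarrow> pres_eq R v w \<Longrightarrow> pres_eq R u w"
| cancel: "pres_eq R (u @ [(x, b), (x, \<not> b)] @ v) (u @ v)"
| rel: "(r, s) \<in> R \<Longrightarrow> pres_eq R (u @ r @ v) (u @ s @ v)"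

definition pres_rel :: "'a set \<Rightarrow> ('a word \<times> 'a word) set \<Rightarrow> ('a word \<times> 'a word) set" where
  "pres_rel S R = {(u, v). u \<in> words S \<and> v \<in> words S \<and> pres_eq R u v}"

definition presented_group :: "'a set \<Rightarrow> ('a word \<times> 'a word) set \<Rightarrow> 'a word set monoid" where
  "presented_group S R =
     \<lparr> carrier = words S // pres_rel S R,
       monoid.mult = (\<lambda>A B. pres_rel S R `` {(SOME u. u \<in> A) @ (SOME v. v \<in> B)}),
       monoid.one = pres_rel S R `` {[]} \<rparr>"

definition pgen :: "'a set \<Rightarrow> ('a word \<times> 'a word) set \<Rightarrow> 'a \<Rightarrow> 'a word set" where
  "pgen S R x = pres_rel S R `` {[(x, True)]}"

definition alt_word :: "'a \<Rightarrow> 'a \<Rightarrow> nat \<Rightarrow> 'a word" where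
  "alt_word a b k = pw (map (\<lambda>i. if even i then a else b) [0..<k])"

text \<open>\<open>m a b \<ge> 2\<close> means the relation \<open>aba\<dots> = bab\<dots>\<close> (length \<open>m a b\<close>) is imposed;
  \<open>m a b < 2\<close> means no relation between a and b.\<close>
definition artin_rels :: "'a set \<Rightarrow> ('a \<Rightarrow> 'a \<Rightarrow> nat) \<Rightarrow> ('a word \<times> 'a word) set" where
  "artin_rels S m = {(alt_word a b (m a b), alt_word b a (m a b)) | a b.
       a \<in> S \<and> b \<in> S \<and> a \<noteq> b \<and> m a b \<ge> 2}"

definition is_artin_group :: "('g, 'b) monoid_scheme \<Rightarrow> bool" where
  "is_artin_group G \<longleftrightarrow> (\<exists>(S :: nat set) m. (\<forall>a b. m a b = m b a) \<and>
       G \<cong> presented_group S (artin_rels S m))"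

text \<open>Sig i = \<sigma>_i; Aux i = c_i, \<tau>_i or \<rho>_i depending on the group.\<close>
datatype gen = Sig nat | Aux nat

definition far :: "nat \<Rightarrow> nat \<Rightarrow> bool" where
  "far i j \<longleftrightarrow> i + 2 \<le> j \<or> j + 2 \<le> i"

definition braid_gens :: "nat \<Rightarrow> gen set" where
  "braid_gens n = Sig ` {1..<n}"

definition two_gens :: "nat \<Rightarrow> gen set" where
  "two_gens n = Sig ` {1..<n} \<union> Aux ` {1..<n}"

definition braid_rels :: "nat \<Rightarrow> (gen word \<times> gen word) set" where
  "braid_rels n =
     {(pw [Sig i, Sig (i+1), Sig i], pw [Sig (i+1), Sig i, Sig (i+1)]) | i. 1 \<le> i \<and> i \<le> n - 2}
   \<union> {(pw [Sig i, Sig j], pw [Sig j, Sig i]) | i j. 1 \<le> i \<and> i < n \<and> 1 \<le> j \<and> j < n \<and> far i j}"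

definition UB_rels :: "nat \<Rightarrow> (gen word \<times> gen word) set" where
  "UB_rels n = braid_rels n
   \<union> {(pw [Aux i, Aux j], pw [Aux j, Aux i]) | i j. 1 \<le> i \<and> i < n \<and> 1 \<le> j \<and> j < n \<and> far i j}
   \<union> {(pw [Aux i, Sig j], pw [Sig j, Aux i]) | i j. 1 \<le> i \<and> i < n \<and> 1 \<le> j \<and> j < n \<and> far i j}"

definition SG_rels :: "nat \<Rightarrow> (gen word \<times> gen word) set" where
  "SG_rels n = UB_rels n
   \<union> {(pw [Aux i, Sig i], pw [Sig i, Aux i]) | i. 1 \<le> i \<and> i < n}
   \<union> {(pw [Sig i, Sig (i+1), Aux i], pw [Aux (i+1), Sig i, Sig (i+1)]) | i. 1 \<le> i \<and> i \<le> n - 2}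
   \<union> {(pw [Sig (i+1), Sig i, Aux (i+1)], pw [Aux i, Sig (i+1), Sig i]) | i. 1 \<le> i \<and> i \<le> n - 2}"

definition VB_rels :: "nat \<Rightarrow> (gen word \<times> gen word) set" where
  "VB_rels n = braid_rels n
   \<union> {(pw [Aux i, Aux (i+1), Aux i], pw [Aux (i+1), Aux i, Aux (i+1)]) | i. 1 \<le> i \<and> i \<le> n - 2}
   \<union> {(pw [Aux i, Aux j], pw [Aux j, Aux i]) | i j. 1 \<le> i \<and> i < n \<and> 1 \<le> j \<and> j < n \<and> far i j}
   \<union> {(pw [Aux i, Aux i], []) | i. 1 \<le> i \<and> i < n}
   \<union> {(pw [Sig i, Aux j], pw [Aux j, Sig i]) | i j. 1 \<le> i \<and> i < n \<and> 1 \<le> j \<and> j < n \<and> far i j}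
   \<union> {(pw [Aux i, Aux (i+1), Sig i], pw [Sig (i+1), Aux i, Aux (i+1)]) | i. 1 \<le> i \<and> i \<le> n - 2}"

definition BG :: "nat \<Rightarrow> gen word set monoid" where
  "BG n = presented_group (braid_gens n) (braid_rels n)"
definition UBG :: "nat \<Rightarrow> gen word set monoid" where
  "UBG n = presented_group (two_gens n) (UB_rels n)"
definition SGG :: "nat \<Rightarrow> gen word set monoid" where
  "SGG n = presented_group (two_gens n) (SG_rels n)"
definition VBG :: "nat \<Rightarrow> gen word set monoid" where
  "VBG n = presented_group (two_gens n) (VB_rels n)"

definition gB :: "nat \<Rightarrow> gen \<Rightarrow> gen word set" where "gB n = pgen (braid_gens n) (braid_rels n)"
definition gU :: "nat \<Rightarrow> gen \<Rightarrow> gen word set" where "gU n = pgen (two_gens n) (UB_rels n)"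
definition gS :: "nat \<Rightarrow> gen \<Rightarrow> gen word set" where "gS n = pgen (two_gens n) (SG_rels n)"
definition gV :: "nat \<Rightarrow> gen \<Rightarrow> gen word set" where "gV n = pgen (two_gens n) (VB_rels n)"

end

theory Submission
  imports Defs "HOL-Library.Countable"
begin

text \<open>Everything follows from von Dyck's theorem: a substitution of words for generators that
  sends every defining relation into the congruence of the target presentation induces a
  homomorphism of presented groups. Each relation of \<open>UB_n\<close> is a relation of \<open>SG_n\<close>, and of
  \<open>VB_n\<close> up to orientation, so the generators may be fixed; sending \<open>c_i\<close> to the empty word
  kills every relation not already in \<open>B_n\<close>. The inclusion \<open>B_n \<rightarrow> UB_n\<close> has the latter map
  as a left inverse, hence is injective, and its image is generated by the \<open>\<sigma>_i\<close>.
  Finally the defining relations of \<open>UB_n\<close> are, up to orientation, exactly the Artin relations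
  of the Coxeter matrix with \<open>m(\<sigma>_i, \<sigma>_(i+1)) = 3\<close>, \<open>m = 2\<close> on commuting pairs and no
  relation otherwise; renaming the generators along an injection into \<open>\<nat>\<close> gives the
  required form of an Artin group.\<close>

lemma (in group_hom) iso_subgroup_generated_image:
  assumes "inj_on h (carrier G)" "K \<subseteq> carrier G" "generate G K = carrier G"
  shows "h \<in> iso G (subgroup_generated H (h ` K))"
proof -
  have image: "carrier (subgroup_generated H (h ` K)) = h ` carrier G"
    using subgroup_generated_by_image[OF assms(2)] assms(2,3)
    by (simp add: carrier_subgroup_generated Int_absorb1)
  then have "h \<in> hom G (subgroup_generated H (h ` K))"
    by (simp add: hom_into_subgroup_eq_gen[OF H.is_group] homh)
  with image assms(1) show ?thesis
    by (simp add: iso_def bij_betw_def)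
qed

definition inv_word :: "'a word \<Rightarrow> 'a word" where
  "inv_word w = rev (map (\<lambda>(x, b). (x, \<not> b)) w)"

definition subst_word :: "('a \<Rightarrow> 'b word) \<Rightarrow> 'a word \<Rightarrow> 'b word" where
  "subst_word f w = concat (map (\<lambda>(x, b). if b then f x else inv_word (f x)) w)"

lemma inv_word_simps [simp]:
  "inv_word [] = []"
  "inv_word ((x, b) # w) = inv_word w @ [(x, \<not> b)]"
  "inv_word (u @ v) = inv_word v @ inv_word u"
  "inv_word (inv_word w) = w"
  by (auto simp: inv_word_def rev_map comp_def case_prod_beta)

lemma subst_word_simps [simp]:
  "subst_word f [] = []"
  "subst_word f ((x, b) # w) = (if b then f x else inv_word (f x)) @ subst_word f w"
  "subst_word f (u @ v) = subst_word f u @ subst_word f v"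
  by (simp_all add: subst_word_def)

lemma subst_word_pw [simp]: "subst_word f (pw xs) = concat (map f xs)"
  by (induction xs) (auto simp: pw_def)

lemma subst_word_letters: "subst_word (\<lambda>x. [(g x, True)]) w = map (apfst g) w"
  by (induction w) auto

lemma subst_word_letters_id [simp]: "subst_word (\<lambda>x. [(x, True)]) w = w"
  by (simp add: subst_word_letters apfst_def map_prod_def)

lemma subst_word_inv_word [simp]: "subst_word f (inv_word w) = inv_word (subst_word f w)"
  by (induction w) auto

lemma words_simps [simp]:
  "[] \<in> words S"
  "(x, b) # w \<in> words S \<longleftrightarrow> x \<in> S \<and> w \<in> words S"
  "u @ v \<in> words S \<longleftrightarrow> u \<in> words S \<and> v \<in> words S"
  "inv_word w \<in> words S \<longleftrightarrow> w \<in> words S"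
  by (auto simp: words_def inv_word_def)

lemma subst_word_in_words:
  assumes "\<And>x. x \<in> S \<Longrightarrow> f x \<in> words S'" and "w \<in> words S"
  shows "subst_word f w \<in> words S'"
  using assms(2) by (induction w) (auto simp: assms(1))

lemma pres_eq_append_context:
  "pres_eq R u v \<Longrightarrow> pres_eq R (p @ u @ q) (p @ v @ q)"
proof (induction rule: pres_eq.induct)
  case (refl w)
  show ?case by (rule pres_eq.refl)
next
  case (sym u v)
  from sym.IH show ?case by (rule pres_eq.sym)
next
  case (trans u v w)
  from trans.IH show ?case by (rule pres_eq.trans)
next
  case (cancel u x b v)
  show ?case using pres_eq.cancel[of R "p @ u" x b "v @ q"] by simp
next
  case (rel r s u v)
  then show ?case using pres_eq.rel[of r s R "p @ u" "v @ q"] by simp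
qed

lemma pres_eq_append:
  "pres_eq R u v \<Longrightarrow> pres_eq R u' v' \<Longrightarrow> pres_eq R (u @ u') (v @ v')"
  using pres_eq_append_context[of R u v "[]" u'] pres_eq_append_context[of R u' v' v "[]"]
  by (auto intro: pres_eq.trans)

lemma pres_eq_relI: "(r, s) \<in> R \<Longrightarrow> pres_eq R r s"
  using pres_eq.rel[of r s R "[]" "[]"] by simp

lemma pres_eq_inv_word_right: "pres_eq R (w @ inv_word w) []"
proof (induction w)
  case Nil
  show ?case by (simp add: pres_eq.refl)
next
  case (Cons a w)
  obtain x b where a: "a = (x, b)" by force
  have "pres_eq R ([(x, b)] @ (w @ inv_word w) @ [(x, \<not> b)]) ([(x, b)] @ [] @ [(x, \<not> b)])"
    using Cons.IH by (rule pres_eq_append_context)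
  moreover have "pres_eq R [(x, b), (x, \<not> b)] []"
    using pres_eq.cancel[of R "[]" x b "[]"] by simp
  ultimately show ?case using a by (auto intro: pres_eq.trans)
qed

lemma pres_eq_inv_word_left: "pres_eq R (inv_word w @ w) []"
proof (induction w)
  case Nil
  show ?case by (simp add: pres_eq.refl)
next
  case (Cons a w)
  obtain x b where a: "a = (x, b)" by force
  have "pres_eq R (inv_word w @ [(x, \<not> b), (x, \<not> \<not> b)] @ w) (inv_word w @ w)"
    by (rule pres_eq.cancel)
  with Cons.IH a show ?case by (auto intro: pres_eq.trans)
qed

lemma pres_eq_subst_word:
  assumes rels: "\<And>r s. (r, s) \<in> R \<Longrightarrow> pres_eq R' (subst_word f r) (subst_word f s)"
  shows "pres_eq R u v \<Longrightarrow> pres_eq R' (subst_word f u) (subst_word f v)"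
proof (induction rule: pres_eq.induct)
  case (refl w)
  show ?case by (rule pres_eq.refl)
next
  case (sym u v)
  from sym.IH show ?case by (rule pres_eq.sym)
next
  case (trans u v w)
  from trans.IH show ?case by (rule pres_eq.trans)
next
  case (cancel u x b v)
  have "pres_eq R' (subst_word f [(x, b), (x, \<not> b)]) []"
    using pres_eq_inv_word_right[of R' "f x"] pres_eq_inv_word_left[of R' "f x"] by (cases b) auto
  then have "pres_eq R' (subst_word f u @ subst_word f [(x, b), (x, \<not> b)] @ subst_word f v)
      (subst_word f u @ [] @ subst_word f v)"
    by (rule pres_eq_append_context)
  then show ?case by simp
next
  case (rel r s u v)
  then show ?case
    using pres_eq_append_context[OF rels, of r s "subst_word f u" "subst_word f v"] by simp
qed

lemma pres_eq_eqI:
  assumes "\<And>r s. (r, s) \<in> R \<Longrightarrow> pres_eq R' r s"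
    and "\<And>r s. (r, s) \<in> R' \<Longrightarrow> pres_eq R r s"
  shows "pres_eq R = pres_eq R'"
  using pres_eq_subst_word[of R R' "\<lambda>x. [(x, True)]"] pres_eq_subst_word[of R' R "\<lambda>x. [(x, True)]"]
    assms by (intro ext iffI) simp_all

section \<open>Presented groups\<close>

definition word_class :: "'a set \<Rightarrow> ('a word \<times> 'a word) set \<Rightarrow> 'a word \<Rightarrow> 'a word set" where
  "word_class S R w = pres_rel S R `` {w}"

lemma presented_group_cong: "pres_eq R = pres_eq R' \<Longrightarrow> presented_group S R = presented_group S R'"
  by (simp add: presented_group_def pres_rel_def)

lemma pgen_eq_word_class: "pgen S R x = word_class S R [(x, True)]"
  by (simp add: pgen_def word_class_def)

lemma equiv_pres_rel: "equiv (words S) (pres_rel S R)"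
  unfolding equiv_def refl_on_def sym_def trans_def pres_rel_def
  by (auto intro: pres_eq.refl pres_eq.sym pres_eq.trans)

lemma word_class_eq_iff:
  "u \<in> words S \<Longrightarrow> v \<in> words S \<Longrightarrow> word_class S R u = word_class S R v \<longleftrightarrow> pres_eq R u v"
  using equiv_class_eq_iff[OF equiv_pres_rel, of u v S R]
  by (auto simp: word_class_def pres_rel_def)

lemma word_class_in_carrier: "w \<in> words S \<Longrightarrow> word_class S R w \<in> carrier (presented_group S R)"
  by (auto simp: word_class_def presented_group_def quotientI)

lemma carrier_presented_groupE:
  assumes "A \<in> carrier (presented_group S R)"
  obtains w where "w \<in> words S" "A = word_class S R w"
  using assms by (auto simp: word_class_def presented_group_def elim!: quotientE)

lemma some_in_word_class:
  assumes "w \<in> words S"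
  shows "(SOME u. u \<in> word_class S R w) \<in> words S \<and> pres_eq R w (SOME u. u \<in> word_class S R w)"
proof -
  have "w \<in> word_class S R w"
    using assms by (auto simp: word_class_def pres_rel_def pres_eq.refl)
  then have "(SOME u. u \<in> word_class S R w) \<in> word_class S R w" by (rule someI)
  then show ?thesis by (auto simp: word_class_def pres_rel_def)
qed

lemma mult_word_class:
  assumes "u \<in> words S" "v \<in> words S"
  shows "word_class S R u \<otimes>\<^bsub>presented_group S R\<^esub> word_class S R v = word_class S R (u @ v)"
proof -
  let ?u = "SOME x. x \<in> word_class S R u" and ?v = "SOME x. x \<in> word_class S R v"
  have "?u \<in> words S" "pres_eq R u ?u" "?v \<in> words S" "pres_eq R v ?v"
    using some_in_word_class[OF assms(1)] some_in_word_class[OF assms(2)] by auto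
  with assms have "word_class S R (?u @ ?v) = word_class S R (u @ v)"
    by (subst word_class_eq_iff) (auto intro: pres_eq.sym pres_eq_append)
  then show ?thesis by (simp add: presented_group_def word_class_def)
qed

lemma one_presented_group: "\<one>\<^bsub>presented_group S R\<^esub> = word_class S R []"
  by (simp add: presented_group_def word_class_def)

lemma group_presented_group: "group (presented_group S R)"
proof (rule groupI)
  fix x y
  assume "x \<in> carrier (presented_group S R)" "y \<in> carrier (presented_group S R)"
  then show "x \<otimes>\<^bsub>presented_group S R\<^esub> y \<in> carrier (presented_group S R)"
    by (auto elim!: carrier_presented_groupE simp: mult_word_class word_class_in_carrier)
next
  show "\<one>\<^bsub>presented_group S R\<^esub> \<in> carrier (presented_group S R)"
    by (simp add: one_presented_group word_class_in_carrier)
next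
  fix x y z
  assume "x \<in> carrier (presented_group S R)" "y \<in> carrier (presented_group S R)"
    "z \<in> carrier (presented_group S R)"
  then show "x \<otimes>\<^bsub>presented_group S R\<^esub> y \<otimes>\<^bsub>presented_group S R\<^esub> z =
      x \<otimes>\<^bsub>presented_group S R\<^esub> (y \<otimes>\<^bsub>presented_group S R\<^esub> z)"
    by (auto elim!: carrier_presented_groupE simp: mult_word_class)
next
  fix x
  assume "x \<in> carrier (presented_group S R)"
  then show "\<one>\<^bsub>presented_group S R\<^esub> \<otimes>\<^bsub>presented_group S R\<^esub> x = x"
    by (auto elim!: carrier_presented_groupE simp: mult_word_class one_presented_group)
next
  fix x
  assume "x \<in> carrier (presented_group S R)"
  then obtain w where w: "w \<in> words S" "x = word_class S R w"
    by (rule carrier_presented_groupE)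
  then have "word_class S R (inv_word w) \<otimes>\<^bsub>presented_group S R\<^esub> x = \<one>\<^bsub>presented_group S R\<^esub>"
    by (simp add: mult_word_class one_presented_group word_class_eq_iff pres_eq_inv_word_left)
  with w show "\<exists>y \<in> carrier (presented_group S R). y \<otimes>\<^bsub>presented_group S R\<^esub> x = \<one>\<^bsub>presented_group S R\<^esub>"
    by (auto intro!: word_class_in_carrier)
qed

lemma inv_word_class:
  "w \<in> words S \<Longrightarrow> inv\<^bsub>presented_group S R\<^esub> (word_class S R w) = word_class S R (inv_word w)"
  by (rule group.inv_equality[OF group_presented_group])
    (simp_all add: mult_word_class one_presented_group word_class_eq_iff pres_eq_inv_word_left
      word_class_in_carrier)

lemma generate_pgen: "generate (presented_group S R) (pgen S R ` S) = carrier (presented_group S R)"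
proof
  show "generate (presented_group S R) (pgen S R ` S) \<subseteq> carrier (presented_group S R)"
    by (rule group.generate_incl[OF group_presented_group])
      (auto simp: pgen_eq_word_class intro: word_class_in_carrier)
next
  have "word_class S R w \<in> generate (presented_group S R) (pgen S R ` S)" if "w \<in> words S" for w
    using that
  proof (induction w)
    case Nil
    show ?case using generate.one by (metis one_presented_group)
  next
    case (Cons a w)
    obtain x b where a: "a = (x, b)" by force
    with Cons.prems have x: "x \<in> S" and w: "w \<in> words S" by auto
    have gen: "word_class S R [(x, True)] \<in> pgen S R ` S"
      using x by (simp add: pgen_eq_word_class)
    have "word_class S R [(x, b)] \<in> generate (presented_group S R) (pgen S R ` S)"
    proof (cases b)
      case True
      with gen show ?thesis by (simp add: generate.incl)
    next
      case False
      with x have "word_class S R [(x, b)] = inv\<^bsub>presented_group S R\<^esub> word_class S R [(x, True)]"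
        by (simp add: inv_word_class)
      with gen show ?thesis by (simp add: generate.inv)
    qed
    with Cons.IH[OF w] show ?case
      using generate.eng mult_word_class[of "[(x, b)]" S w R] x w a by fastforce
  qed
  then show "carrier (presented_group S R) \<subseteq> generate (presented_group S R) (pgen S R ` S)"
    by (auto elim: carrier_presented_groupE)
qed

section \<open>Homomorphisms induced by substitutions\<close>

text \<open>Von Dyck's theorem. The choice of a representative in \<open>presented_hom\<close> is harmless
  precisely because of \<open>rels_respected\<close>.\<close>

definition presented_hom ::
    "'a set \<Rightarrow> ('a word \<times> 'a word) set \<Rightarrow> 'b set \<Rightarrow> ('b word \<times> 'b word) set \<Rightarrow>
     ('a \<Rightarrow> 'b word) \<Rightarrow> 'a word set \<Rightarrow> 'b word set" where
  "presented_hom S R S' R' f A = word_class S' R' (subst_word f (SOME u. u \<in> A))"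

locale presentation_hom =
  fixes S :: "'a set" and R and S' :: "'b set" and R' and f :: "'a \<Rightarrow> 'b word"
  assumes gens_to_words: "\<And>x. x \<in> S \<Longrightarrow> f x \<in> words S'"
    and rels_respected: "\<And>r s. (r, s) \<in> R \<Longrightarrow> pres_eq R' (subst_word f r) (subst_word f s)"
begin

lemma presented_hom_word_class:
  "w \<in> words S \<Longrightarrow> presented_hom S R S' R' f (word_class S R w) = word_class S' R' (subst_word f w)"
  unfolding presented_hom_def using some_in_word_class[of w S R]
  by (subst word_class_eq_iff)
    (auto intro: subst_word_in_words gens_to_words pres_eq.sym pres_eq_subst_word rels_respected)

lemma presented_hom_pgen:
  "x \<in> S \<Longrightarrow> presented_hom S R S' R' f (pgen S R x) = word_class S' R' (f x)"
  by (simp add: pgen_eq_word_class presented_hom_word_class)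

lemma presented_hom_in_hom:
  "presented_hom S R S' R' f \<in> hom (presented_group S R) (presented_group S' R')"
proof (rule homI)
  fix A
  assume "A \<in> carrier (presented_group S R)"
  then obtain w where "w \<in> words S" "A = word_class S R w"
    by (rule carrier_presented_groupE)
  then show "presented_hom S R S' R' f A \<in> carrier (presented_group S' R')"
    by (simp add: presented_hom_word_class word_class_in_carrier subst_word_in_words[OF gens_to_words])
next
  fix A B
  assume "A \<in> carrier (presented_group S R)" "B \<in> carrier (presented_group S R)"
  then obtain u v where "u \<in> words S" "A = word_class S R u" "v \<in> words S" "B = word_class S R v"
    by (metis carrier_presented_groupE)
  then show "presented_hom S R S' R' f (A \<otimes>\<^bsub>presented_group S R\<^esub> B) =
      presented_hom S R S' R' f A \<otimes>\<^bsub>presented_group S' R'\<^esub> presented_hom S R S' R' f B"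
    by (simp add: mult_word_class presented_hom_word_class subst_word_in_words[OF gens_to_words])
qed

end

lemma presentation_hom_inclusion:
  assumes "S \<subseteq> S'" and "\<And>r s. (r, s) \<in> R \<Longrightarrow> pres_eq R' r s"
  shows "presentation_hom S R S' R' (\<lambda>x. [(x, True)])"
  using assms by unfold_locales auto

lemma presented_hom_left_inverse:
  assumes f: "presentation_hom S R S' R' f" and g: "presentation_hom S' R' S R g"
    and inverse: "\<And>x. x \<in> S \<Longrightarrow> subst_word g (f x) = [(x, True)]"
    and A: "A \<in> carrier (presented_group S R)"
  shows "presented_hom S' R' S R g (presented_hom S R S' R' f A) = A"
proof -
  obtain w where w: "w \<in> words S" "A = word_class S R w"
    using A by (rule carrier_presented_groupE)
  have "subst_word g (subst_word f w) = w"
    using w(1) by (induction w) (auto simp: inverse)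
  moreover have "subst_word f w \<in> words S'"
    using presentation_hom.gens_to_words[OF f] w(1) by (rule subst_word_in_words)
  ultimately show ?thesis
    using w by (simp add: presentation_hom.presented_hom_word_class[OF f]
        presentation_hom.presented_hom_word_class[OF g])
qed

lemma presented_group_rename_iso:
  fixes g :: "'a \<Rightarrow> 'b"
  assumes "inj g"
  shows "presented_group S R \<cong>
    presented_group (g ` S) (map_prod (map (apfst g)) (map (apfst g)) ` R)"
proof -
  let ?R' = "map_prod (map (apfst g)) (map (apfst g)) ` R"
  let ?f = "\<lambda>x. [(g x, True)]" and ?g = "\<lambda>y. [(the_inv g y, True)]"
  have rename_back: "subst_word ?g (map (apfst g) w) = w" for w
    using assms by (induction w) (auto simp: the_inv_f_f)
  have f: "presentation_hom S R (g ` S) ?R' ?f"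
    by unfold_locales (auto simp: subst_word_letters intro: pres_eq_relI)
  have g: "presentation_hom (g ` S) ?R' S R ?g"
    by unfold_locales (auto simp: rename_back the_inv_f_f[OF assms] intro: pres_eq_relI)
  have "presented_hom (g ` S) ?R' S R ?g (presented_hom S R (g ` S) ?R' ?f A) = A"
    if "A \<in> carrier (presented_group S R)" for A
    using presented_hom_left_inverse[OF f g _ that] by (simp add: the_inv_f_f[OF assms])
  moreover have "presented_hom S R (g ` S) ?R' ?f (presented_hom (g ` S) ?R' S R ?g B) = B"
    if "B \<in> carrier (presented_group (g ` S) ?R')" for B
  proof (rule presented_hom_left_inverse[OF g f _ that])
    show "subst_word ?f [(the_inv g y, True)] = [(y, True)]" if "y \<in> g ` S" for y
      using that by (auto simp: the_inv_f_f[OF assms])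
  qed
  ultimately have "group_isomorphisms (presented_group S R) (presented_group (g ` S) ?R')
      (presented_hom S R (g ` S) ?R' ?f) (presented_hom (g ` S) ?R' S R ?g)"
    unfolding group_isomorphisms_def
    using presentation_hom.presented_hom_in_hom[OF f] presentation_hom.presented_hom_in_hom[OF g]
    by blast
  then show ?thesis
    by (intro is_isoI group_isomorphisms_imp_iso)
qed

section \<open>Artin groups\<close>

lemma map_apfst_alt_word: "map (apfst g) (alt_word a b k) = alt_word (g a) (g b) k"
  by (simp add: alt_word_def pw_def)

lemma artin_relI:
  assumes "a \<in> S" "b \<in> S" "a \<noteq> b" "m a b = k" "k \<ge> 2"
  shows "(alt_word a b k, alt_word b a k) \<in> artin_rels S m"
  using assms unfolding artin_rels_def by blast

lemma artin_rels_rename: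
  assumes "inj g"
  shows "map_prod (map (apfst g)) (map (apfst g)) ` artin_rels S m =
    artin_rels (g ` S) (\<lambda>a b. m (the_inv g a) (the_inv g b))"
    (is "?lhs = artin_rels (g ` S) ?m")
proof (intro equalityI subsetI)
  fix rel
  assume "rel \<in> ?lhs"
  then obtain a b where "a \<in> S" "b \<in> S" "a \<noteq> b" "m a b \<ge> 2"
    and "rel = (alt_word (g a) (g b) (m a b), alt_word (g b) (g a) (m a b))"
    by (auto simp: artin_rels_def map_apfst_alt_word)
  moreover have "?m (g a) (g b) = m a b"
    by (simp add: the_inv_f_f[OF assms])
  ultimately show "rel \<in> artin_rels (g ` S) ?m"
    using inj_eq[OF assms] by (auto intro!: artin_relI)
next
  fix rel
  assume "rel \<in> artin_rels (g ` S) ?m"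
  then obtain a b where "a \<in> S" "b \<in> S" "a \<noteq> b" "m a b \<ge> 2"
    and "rel = (alt_word (g a) (g b) (m a b), alt_word (g b) (g a) (m a b))"
    by (fastforce simp: artin_rels_def the_inv_f_f[OF assms])
  then have "rel = map_prod (map (apfst g)) (map (apfst g)) (alt_word a b (m a b), alt_word b a (m a b))"
    by (simp add: map_apfst_alt_word)
  with \<open>a \<in> S\<close> \<open>b \<in> S\<close> \<open>a \<noteq> b\<close> \<open>m a b \<ge> 2\<close> show "rel \<in> ?lhs"
    by (auto intro!: imageI artin_relI)
qed

lemma is_artin_group_presented_group:
  fixes S :: "'a::countable set"
  assumes "\<And>a b. m a b = m b a"
  shows "is_artin_group (presented_group S (artin_rels S m))"
proof -
  let ?m = "\<lambda>a b. m (the_inv to_nat a) (the_inv to_nat b)"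
  have "presented_group S (artin_rels S m) \<cong> presented_group (to_nat ` S) (artin_rels (to_nat ` S) ?m)"
    using presented_group_rename_iso[OF inj_to_nat, of S "artin_rels S m"]
    by (simp only: artin_rels_rename[OF inj_to_nat])
  moreover have "\<forall>a b. ?m a b = ?m b a"
    using assms by simp
  ultimately show ?thesis
    unfolding is_artin_group_def by (intro exI[of _ "to_nat ` S"] exI[of _ ?m] conjI)
qed

lemma alt_word_2: "alt_word a b 2 = pw [a, b]"
  by (simp add: alt_word_def pw_def numeral_2_eq_2)

lemma alt_word_3: "alt_word a b 3 = pw [a, b, a]"
  by (simp add: alt_word_def pw_def numeral_3_eq_3)

section \<open>The universal braid group\<close>

instance gen :: countable
  by countable_datatype

fun UB_coxeter :: "gen \<Rightarrow> gen \<Rightarrow> nat" where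
  "UB_coxeter (Sig i) (Sig j) = (if i + 1 = j \<or> j + 1 = i then 3 else if far i j then 2 else 0)"
| "UB_coxeter (Sig i) (Aux j) = (if far i j then 2 else 0)"
| "UB_coxeter (Aux i) (Sig j) = (if far i j then 2 else 0)"
| "UB_coxeter (Aux i) (Aux j) = (if far i j then 2 else 0)"

lemma UB_coxeter_sym: "UB_coxeter x y = UB_coxeter y x"
  by (cases x; cases y) (auto simp: far_def)

lemma UB_rels_subset_artin_rels: "UB_rels n \<subseteq> artin_rels (two_gens n) UB_coxeter"
proof
  fix rel
  assume "rel \<in> UB_rels n"
  then consider
      (braid) i where "rel = (alt_word (Sig i) (Sig (i + 1)) 3, alt_word (Sig (i + 1)) (Sig i) 3)"
        "1 \<le> i" "i \<le> n - 2"
    | (far) x y i j where "rel = (alt_word x y 2, alt_word y x 2)" "1 \<le> i" "i < n" "1 \<le> j" "j < n"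
        "far i j" "x = Sig i \<or> x = Aux i" "y = Sig j \<or> y = Aux j"
    unfolding UB_rels_def braid_rels_def alt_word_2 alt_word_3 by blast
  then show "rel \<in> artin_rels (two_gens n) UB_coxeter"
  proof cases
    case braid
    then show ?thesis by (auto intro!: artin_relI simp: two_gens_def)
  next
    case far
    then have "UB_coxeter x y = 2" "x \<noteq> y"
      by (auto simp: far_def)
    with far show ?thesis by (auto intro!: artin_relI simp: two_gens_def)
  qed
qed

lemma far_commutator_in_UB_rels:
  assumes "x = Sig i \<or> x = Aux i" "1 \<le> i" "i < n"
    and "y = Sig j \<or> y = Aux j" "1 \<le> j" "j < n" and "far i j"
  shows "(pw [x, y], pw [y, x]) \<in> UB_rels n \<or> (pw [y, x], pw [x, y]) \<in> UB_rels n"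
  using assms by (auto simp: UB_rels_def braid_rels_def pw_def far_def)

lemma artin_rels_in_UB_rels:
  assumes "(r, s) \<in> artin_rels (two_gens n) UB_coxeter"
  shows "(r, s) \<in> UB_rels n \<or> (s, r) \<in> UB_rels n"
proof -
  obtain a b where ab: "a \<in> two_gens n" "b \<in> two_gens n" "a \<noteq> b" "UB_coxeter a b \<ge> 2"
    and rs: "r = alt_word a b (UB_coxeter a b)" "s = alt_word b a (UB_coxeter a b)"
    using assms unfolding artin_rels_def by blast
  obtain i where i: "a = Sig i \<or> a = Aux i" "1 \<le> i" "i < n"
    using ab(1) by (auto simp: two_gens_def)
  obtain j where j: "b = Sig j \<or> b = Aux j" "1 \<le> j" "j < n"
    using ab(2) by (auto simp: two_gens_def)
  consider (ascending) "a = Sig i" "b = Sig (i + 1)" | (descending) "a = Sig (j + 1)" "b = Sig j"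
    | (far) "far i j" "UB_coxeter a b = 2"
    using i(1) j(1) ab(4) by (cases a; cases b) (auto split: if_splits)
  then show ?thesis
  proof cases
    case ascending
    then have "r = pw [Sig i, Sig (i + 1), Sig i]" "s = pw [Sig (i + 1), Sig i, Sig (i + 1)]"
      using rs by (simp_all add: alt_word_3)
    with i j ascending have "(r, s) \<in> braid_rels n"
      by (auto simp: braid_rels_def pw_def)
    then show ?thesis by (simp add: UB_rels_def)
  next
    case descending
    then have "s = pw [Sig j, Sig (j + 1), Sig j]" "r = pw [Sig (j + 1), Sig j, Sig (j + 1)]"
      using rs by (simp_all add: alt_word_3)
    with i j descending have "(s, r) \<in> braid_rels n"
      by (auto simp: braid_rels_def pw_def)
    then show ?thesis by (simp add: UB_rels_def)
  next
    case far
    with far_commutator_in_UB_rels[OF i j] show ?thesis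
      by (simp add: rs alt_word_2)
  qed
qed

lemma pres_eq_UB_rels_artin: "pres_eq (UB_rels n) = pres_eq (artin_rels (two_gens n) UB_coxeter)"
proof (rule pres_eq_eqI)
  fix r s
  assume "(r, s) \<in> UB_rels n"
  with UB_rels_subset_artin_rels show "pres_eq (artin_rels (two_gens n) UB_coxeter) r s"
    by (blast intro: pres_eq_relI)
next
  fix r s
  assume "(r, s) \<in> artin_rels (two_gens n) UB_coxeter"
  with artin_rels_in_UB_rels show "pres_eq (UB_rels n) r s"
    by (blast intro: pres_eq_relI pres_eq.sym)
qed

lemma is_artin_group_UBG: "is_artin_group (UBG n)"
  unfolding UBG_def presented_group_cong[OF pres_eq_UB_rels_artin]
  by (rule is_artin_group_presented_group[OF UB_coxeter_sym])

lemma UB_rels_in_VB_rels: "(r, s) \<in> UB_rels n \<Longrightarrow> (r, s) \<in> VB_rels n \<or> (s, r) \<in> VB_rels n"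
  unfolding UB_rels_def VB_rels_def by (auto simp: pw_def far_def)

fun forget_aux :: "gen \<Rightarrow> gen word" where
  "forget_aux (Sig i) = [(Sig i, True)]"
| "forget_aux (Aux i) = []"

lemma presentation_hom_forget_aux:
  "presentation_hom (two_gens n) (UB_rels n) (braid_gens n) (braid_rels n) forget_aux"
proof
  show "forget_aux x \<in> words (braid_gens n)" if "x \<in> two_gens n" for x
    using that by (auto simp: two_gens_def braid_gens_def)
next
  fix r s
  assume "(r, s) \<in> UB_rels n"
  then consider (braid) "(r, s) \<in> braid_rels n"
    | (collapsed) "subst_word forget_aux r = subst_word forget_aux s"
    unfolding UB_rels_def by auto
  then show "pres_eq (braid_rels n) (subst_word forget_aux r) (subst_word forget_aux s)"
  proof cases
    case braid
    then have "subst_word forget_aux r = r" "subst_word forget_aux s = s"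
      by (auto simp: braid_rels_def pw_def)
    with braid show ?thesis by (simp add: pres_eq_relI)
  next
    case collapsed
    then show ?thesis by (simp add: pres_eq.refl)
  qed
qed

lemma UBG_hom_SGG:
  "\<exists>\<phi>. \<phi> \<in> hom (UBG n) (SGG n)
     \<and> (\<forall>i \<in> {1..<n}. \<phi> (gU n (Sig i)) = gS n (Sig i) \<and> \<phi> (gU n (Aux i)) = gS n (Aux i))"
proof -
  interpret presentation_hom "two_gens n" "UB_rels n" "two_gens n" "SG_rels n" "\<lambda>x. [(x, True)]"
    by (rule presentation_hom_inclusion) (auto simp: SG_rels_def intro: pres_eq_relI)
  show ?thesis
    using presented_hom_in_hom presented_hom_pgen
    by (auto simp: UBG_def SGG_def gU_def gS_def pgen_eq_word_class two_gens_def)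
qed

lemma UBG_hom_VBG:
  "\<exists>\<phi>. \<phi> \<in> hom (UBG n) (VBG n)
     \<and> (\<forall>i \<in> {1..<n}. \<phi> (gU n (Sig i)) = gV n (Sig i) \<and> \<phi> (gU n (Aux i)) = gV n (Aux i))"
proof -
  interpret presentation_hom "two_gens n" "UB_rels n" "two_gens n" "VB_rels n" "\<lambda>x. [(x, True)]"
    by (rule presentation_hom_inclusion)
      (auto dest: UB_rels_in_VB_rels intro: pres_eq_relI pres_eq.sym)
  show ?thesis
    using presented_hom_in_hom presented_hom_pgen
    by (auto simp: UBG_def VBG_def gU_def gV_def pgen_eq_word_class two_gens_def)
qed

lemma UBG_hom_BG:
  "\<exists>\<phi>. \<phi> \<in> hom (UBG n) (BG n)
     \<and> (\<forall>i \<in> {1..<n}. \<phi> (gU n (Sig i)) = gB n (Sig i) \<and> \<phi> (gU n (Aux i)) = \<one>\<^bsub>BG n\<^esub>)"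
proof -
  interpret presentation_hom "two_gens n" "UB_rels n" "braid_gens n" "braid_rels n" forget_aux
    by (rule presentation_hom_forget_aux)
  show ?thesis
    using presented_hom_in_hom presented_hom_pgen
    by (auto simp: UBG_def BG_def gU_def gB_def pgen_eq_word_class one_presented_group two_gens_def)
qed

lemma BG_iso_subgroup_UBG:
  "\<exists>h. h \<in> iso (BG n) (subgroup_generated (UBG n) (gU n ` Sig ` {1..<n}))
     \<and> (\<forall>i \<in> {1..<n}. h (gB n (Sig i)) = gU n (Sig i))"
proof -
  have h: "presentation_hom (braid_gens n) (braid_rels n) (two_gens n) (UB_rels n) (\<lambda>x. [(x, True)])"
    by (rule presentation_hom_inclusion)
      (auto simp: braid_gens_def two_gens_def UB_rels_def intro: pres_eq_relI)
  define h where "h = presented_hom (braid_gens n) (braid_rels n) (two_gens n) (UB_rels n) (\<lambda>x. [(x, True)])"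
  have h_gens: "h (gB n (Sig i)) = gU n (Sig i)" if "i \<in> {1..<n}" for i
    using that presentation_hom.presented_hom_pgen[OF h]
    by (simp add: h_def gB_def gU_def pgen_eq_word_class braid_gens_def)
  have hom: "group_hom (BG n) (UBG n) h"
    using presentation_hom.presented_hom_in_hom[OF h]
    by (simp add: h_def group_hom_def group_hom_axioms_def group_presented_group BG_def UBG_def)
  have forget_inverse: "subst_word forget_aux [(x, True)] = [(x, True)]" if "x \<in> braid_gens n" for x
    using that by (auto simp: braid_gens_def)
  have inj: "inj_on h (carrier (BG n))"
  proof (rule inj_on_inverseI)
    fix A
    assume "A \<in> carrier (BG n)"
    then show "presented_hom (two_gens n) (UB_rels n) (braid_gens n) (braid_rels n) forget_aux (h A) = A"
      using presented_hom_left_inverse[OF h presentation_hom_forget_aux forget_inverse]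
      by (simp add: h_def BG_def)
  qed
  have "gB n ` braid_gens n \<subseteq> carrier (BG n)"
    by (auto simp: BG_def gB_def pgen_eq_word_class intro: word_class_in_carrier)
  moreover have "generate (BG n) (gB n ` braid_gens n) = carrier (BG n)"
    by (simp add: BG_def gB_def generate_pgen)
  ultimately have "h \<in> iso (BG n) (subgroup_generated (UBG n) (h ` gB n ` braid_gens n))"
    by (rule group_hom.iso_subgroup_generated_image[OF hom inj])
  moreover have "h ` gB n ` braid_gens n = gU n ` Sig ` {1..<n}"
    unfolding braid_gens_def image_image using h_gens by (rule image_cong[OF HOL.refl])
  ultimately have "h \<in> iso (BG n) (subgroup_generated (UBG n) (gU n ` Sig ` {1..<n}))"
    by simp
  with h_gens show ?thesis
    by (intro exI[of _ h] conjI ballI)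
qed

theorem proposition1:
  fixes n :: nat
  assumes "n \<ge> 2"
  shows "(\<exists>h. h \<in> iso (BG n) (subgroup_generated (UBG n) (gU n ` Sig ` {1..<n}))
             \<and> (\<forall>i \<in> {1..<n}. h (gB n (Sig i)) = gU n (Sig i)))
    \<and> (\<exists>\<phi>. \<phi> \<in> hom (UBG n) (SGG n)
             \<and> (\<forall>i \<in> {1..<n}. \<phi> (gU n (Sig i)) = gS n (Sig i) \<and> \<phi> (gU n (Aux i)) = gS n (Aux i)))
    \<and> (\<exists>\<phi>. \<phi> \<in> hom (UBG n) (VBG n)
             \<and> (\<forall>i \<in> {1..<n}. \<phi> (gU n (Sig i)) = gV n (Sig i) \<and> \<phi> (gU n (Aux i)) = gV n (Aux i)))
    \<and> (\<exists>\<phi>. \<phi> \<in> hom (UBG n) (BG n)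
             \<and> (\<forall>i \<in> {1..<n}. \<phi> (gU n (Sig i)) = gB n (Sig i) \<and> \<phi> (gU n (Aux i)) = \<one>\<^bsub>BG n\<^esub>))
    \<and> is_artin_group (UBG n)"
  by (intro conjI BG_iso_subgroup_UBG UBG_hom_SGG UBG_hom_VBG UBG_hom_BG is_artin_group_UBG)

end
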